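(* Under the standing assumptions (A1)–(A4), let $\alpha>0$ and $0<\gamma<\frac{1}{m-1}$, and consider the system (Algorithm A) $$\begin{aligned} \dot x&=\mathrm{Prox}_{F^m}\Big[x-\nabla F^0(x)+v+\gamma\textstyle\sum_{j=1}^{m-1}z^j\Big]-x,\\ \dot z^j&=\mathrm{Prox}_{F^j}[x-\gamma z^j]-x,\quad j=1,\dots,m-1,\\ \dot v&=-H_{nq}^{-1}(x-d)-\alpha L_{nq}v-w,\\ \dot w&=\alpha L_{nq}v, \end{aligned}$$ with state $(x,z,v,w)\in\mathbb{R}^{nq}\times\mathbb{R}^{(m-1)nq}\times\mathbb{R}^{nq}\times\mathbb{R}^{nq}$, $z=((z^1)^T,\dots,(z^{m-1})^T)^T$. If $(x^*,z^*,v^*,w^* )$ is an equilibrium of this system and $(\mathbf{1}_n\otimes I_q)^TH_{nq}w^*=\mathbf{0}_q$, then $x^*$ is a solution of the problem $\min_x \sum_i f_i(x_i)$ s.t. $\sum_i x_i=\sum_i d_i$.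
   Context: Standing setup: $n$ agents; agent $i$ has state $x_i\in\mathbb{R}^q$, and $x=(x_1^T,\dots,x_n^T)^T\in\mathbb{R}^{nq}$. Given $d_i\in\mathbb{R}^q$, $d=(d_1^T,\dots,d_n^T)^T$. Integer $m\ge 2$. Each local cost is $f_i=\sum_{j=0}^m f_i^j$; $F^j(x)=\sum_{i=1}^n f_i^j(x_i)$. $\nabla F^0(x)=(\nabla f_1^0(x_1)^T,\dots,\nabla f_n^0(x_n)^T)^T$. Assumptions: (A1) each $f_i^0$ is twice continuously differentiable and strongly convex with a common constant $c>m-1$; (A2) each $f_i^j$, $j=1,\dots,m$, is a proper closed convex function; (A3) the graph is weighted, directed and strongly connected; (A4) the problem is feasible. Proximal operator: $\mathrm{prox}_f[\theta]=\arg\min_\delta\{f(\delta)+\frac12\|\delta-\theta\|^2\}$, and for $\xi=(\xi_1,\dots,\xi_n)\in\mathbb{R}^{nq}$, $\mathrm{Prox}_{F^j}[\xi]=(\mathrm{prox}_{f_1^j}[\xi_1]^T,\dots,\mathrm{prox}_{f_n^j}[\xi_n]^T)^T$. Graph: weighted adjacency matrix $\mathcal{A}=[a_{ij}]$ ($a_{ij}>0$ iff agent $i$ receives from $j$, $a_{ii}=0$), Laplacian $L_n=D^{in}-\mathcal{A}$ with $D^{in}=\mathrm{diag}(\sum_j a_{ij})$; $h=(h_1,\dots,h_n)^T$ is the positive left eigenvector with $h^TL_n=0$, $\sum_i h_i=1$; $H=\mathrm{diag}(h_1,\dots,h_n)$, $H_{nq}=H\otimes I_q$, $L_{nq}=L_n\otimes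 I_q$. *)

theory Defs
  imports "HOL-Analysis.Analysis" "HOL-Library.Extended_Real"
begin

definition proper_fun :: "('a \<Rightarrow> ereal) \<Rightarrow> bool" where
  "proper_fun f \<longleftrightarrow> (\<forall>x. f x \<noteq> -\<infinity>) \<and> (\<exists>x. f x < \<infinity>)"

definition closed_fun :: "('a::topological_space \<Rightarrow> ereal) \<Rightarrow> bool" where
  "closed_fun f \<longleftrightarrow> closed {(x, r::real). f x \<le> ereal r}"

definition convex_efun :: "('a::real_vector \<Rightarrow> ereal) \<Rightarrow> bool" where
  "convex_efun f \<longleftrightarrow> (\<forall>x y t. 0 \<le> t \<and> t \<le> 1 \<longrightarrow>
      f (t *\<^sub>R x + (1 - t) *\<^sub>R y) \<le> ereal t * f x + ereal (1 - t) * f y)"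

definition strongly_convex_with :: "real \<Rightarrow> ('a::real_normed_vector \<Rightarrow> real) \<Rightarrow> bool" where
  "strongly_convex_with c f \<longleftrightarrow> c > 0 \<and> (\<forall>x y t. 0 \<le> t \<and> t \<le> 1 \<longrightarrow>
      f (t *\<^sub>R x + (1 - t) *\<^sub>R y) \<le> t * f x + (1 - t) * f y - c / 2 * t * (1 - t) * (norm (x - y))\<^sup>2)"

definition C2_with_gradient :: "('a::euclidean_space \<Rightarrow> real) \<Rightarrow> ('a \<Rightarrow> 'a) \<Rightarrow> bool" where
  "C2_with_gradient f g \<longleftrightarrow> (\<forall>x. GDERIV f x :> g x) \<and>
     (\<exists>D :: 'a \<Rightarrow> ('a \<Rightarrow>\<^sub>L 'a). (\<forall>x. (g has_derivative blinfun_apply (D x)) (at x)) \<and> continuous_on UNIV D)"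

definition prox :: "('a::real_normed_vector \<Rightarrow> ereal) \<Rightarrow> 'a \<Rightarrow> 'a" where
  "prox f \<theta> = (THE \<delta>. \<forall>y. f \<delta> + ereal ((norm (\<delta> - \<theta>))\<^sup>2 / 2) \<le> f y + ereal ((norm (y - \<theta>))\<^sup>2 / 2))"

end

theory Submission
  imports Defs
begin

text \<open>At an equilibrium, the \<open>w\<close>-equation forces \<open>L v = 0\<close>, so by strong connectivity all agents
share one multiplier \<open>v\<close>; the \<open>v\<close>-equation gives \<open>x - d = -H w\<close>, so the condition on \<open>w\<close> makes
\<open>x\<close> feasible. The fixed-point equations of the proximal operators say that \<open>\<theta> - x\<close> is a
subgradient of the corresponding \<open>f\<^sub>i\<^sup>j\<close>, and the \<open>\<gamma> z\<^sup>j\<close> terms cancel when these are added, so the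
common \<open>v\<close> is a subgradient of every local cost \<open>f\<^sub>i\<close> at \<open>x\<^sub>i\<close>. Adding the subgradient
inequalities over the agents, the linear terms cancel on the constraint set.

Since \<open>prox\<close> is a definite description, its fixed-point equations carry information only once the
proximal objective of a proper closed convex function is known to have a unique minimizer:
existence comes from a cone-shaped minorant, which makes the objective coercive, and uniqueness
from the strong convexity of the quadratic term.\<close>

definition prox_minimizer :: "('a::real_normed_vector \<Rightarrow> ereal) \<Rightarrow> 'a \<Rightarrow> 'a \<Rightarrow> bool" where
  "prox_minimizer f \<theta> \<delta> \<longleftrightarrow>
     (\<forall>y. f \<delta> + ereal ((norm (\<delta> - \<theta>))\<^sup>2 / 2) \<le> f y + ereal ((norm (y - \<theta>))\<^sup>2 / 2))"

definition has_subgradient :: "('a::real_inner \<Rightarrow> ereal) \<Rightarrow> 'a \<Rightarrow> 'a \<Rightarrow> bool" where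
  "has_subgradient f x s \<longleftrightarrow> (\<forall>y. f x + ereal (s \<bullet> (y - x)) \<le> f y)"

definition laplacian :: "('n::finite \<Rightarrow> 'n \<Rightarrow> real) \<Rightarrow> 'n \<Rightarrow> 'n \<Rightarrow> real" where
  "laplacian a i k = (if i = k then (\<Sum>l\<in>UNIV. a i l) else 0) - a i k"

lemma compact_attains_min_closed_sublevels:
  fixes g :: "'a::topological_space \<Rightarrow> ereal"
  assumes K: "compact K" "K \<noteq> {}"
    and closed_sublevel: "\<And>r. closed {x. g x \<le> ereal r}"
  shows "\<exists>x\<in>K. \<forall>y\<in>K. g x \<le> g y"
proof -
  define \<mu> where "\<mu> = Inf (g ` K)"
  have "K \<inter> (\<Inter>r\<in>{r. \<mu> < ereal r}. {x. g x \<le> ereal r}) \<noteq> {}"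
  proof (rule compact_imp_fip_image[OF K(1)])
    fix I' assume I': "finite I'" "I' \<subseteq> {r. \<mu> < ereal r}"
    show "K \<inter> (\<Inter>r\<in>I'. {x. g x \<le> ereal r}) \<noteq> {}"
    proof (cases "I' = {}")
      case True then show ?thesis using K by auto
    next
      case False
      then have "\<mu> < ereal (Min I')" using I'(2) Min_in[OF I'(1) False] by blast
      then obtain y where y: "y \<in> K" "g y < ereal (Min I')"
        unfolding \<mu>_def by (auto simp: Inf_less_iff)
      have "g y \<le> ereal r" if "r \<in> I'" for r
        using y(2) Min_le[OF I'(1) that] by (meson ereal_less_eq(3) less_imp_le order_trans)
      then show ?thesis using y by blast
    qed
  qed (use closed_sublevel in auto)
  then obtain x where x: "x \<in> K" "\<And>r. \<mu> < ereal r \<Longrightarrow> g x \<le> ereal r" by blast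
  have "g x \<le> \<mu>"
  proof (rule dense_ge)
    fix z assume z: "\<mu> < z"
    show "g x \<le> z"
      using x z by (cases z) auto
  qed
  then show ?thesis using x unfolding \<mu>_def by (meson INF_lower order_trans)
qed

lemma closed_fun_add_continuous_sublevel:
  fixes f :: "'a::real_normed_vector \<Rightarrow> ereal"
  assumes "closed_fun f" "continuous_on UNIV q"
  shows "closed {x. f x + ereal (q x) \<le> ereal r}"
proof -
  have "{x. f x + ereal (q x) \<le> ereal r} = (\<lambda>x. (x, r - q x)) -` {(x, s::real). f x \<le> ereal s}"
  proof (rule set_eqI)
    fix x show "x \<in> {x. f x + ereal (q x) \<le> ereal r} \<longleftrightarrow> x \<in> (\<lambda>x. (x, r - q x)) -` {(x, s). f x \<le> ereal s}"
      by (cases "f x") auto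
  qed
  moreover have "continuous_on UNIV (\<lambda>x. (x, r - q x))"
    using assms(2) by (intro continuous_intros) auto
  then have "closed ((\<lambda>x. (x, r - q x)) -` {(x, s). f x \<le> ereal s} \<inter> UNIV)"
    using assms(1) continuous_on_closed_vimage[OF closed_UNIV] unfolding closed_fun_def by blast
  ultimately show ?thesis by simp
qed

lemma closed_fun_sublevel:
  fixes f :: "'a::real_normed_vector \<Rightarrow> ereal"
  assumes "closed_fun f"
  shows "closed {x. f x \<le> ereal r}"
  using closed_fun_add_continuous_sublevel[OF assms, of "\<lambda>_. 0" r] by simp

lemma proper_closed_convex_cone_minorant:
  fixes f :: "'a::euclidean_space \<Rightarrow> ereal"
  assumes pr: "proper_fun f" and cl: "closed_fun f" and cv: "convex_efun f"
    and y0: "f y0 = ereal b"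
  shows "\<exists>A D. D \<ge> 0 \<and> (\<forall>y. ereal (A - D * norm (y - y0)) \<le> f y)"
proof -
  obtain p where p: "p \<in> cball y0 1" "\<And>y. y \<in> cball y0 1 \<Longrightarrow> f p \<le> f y"
    using compact_attains_min_closed_sublevels[of "cball y0 1" f] closed_fun_sublevel[OF cl] by auto
  have "f p \<le> ereal b" using p(2)[of y0] y0 by auto
  moreover have "f p \<noteq> -\<infinity>" using pr unfolding proper_fun_def by auto
  ultimately obtain m0 where m0: "f p = ereal m0" "m0 \<le> b" by (cases "f p") auto
  define D where "D = b - m0"
  have D: "D \<ge> 0" using m0 D_def by auto
  have "ereal (b - D - D * norm (y - y0)) \<le> f y" for y
  proof (cases "norm (y - y0) \<le> 1")
    case True
    then have "f p \<le> f y" using p(2)[of y] by (metis dist_norm mem_cball norm_minus_commute)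
    have "b - D - D * norm (y - y0) \<le> m0" using D D_def
      by (simp add: mult_nonneg_nonneg)
    then have "ereal (b - D - D * norm (y - y0)) \<le> ereal m0" by simp
    with \<open>f p \<le> f y\<close> m0(1) show ?thesis by (metis order.trans)
  next
    case False
    \<comment> \<open>Convexity on the segment from \<open>y0\<close> to \<open>y\<close>, which meets the unit sphere at \<open>z\<close>.\<close>
    define s where "s = norm (y - y0)"
    have s1: "s > 1" using False s_def by auto
    define t where "t = 1 / s"
    have t: "0 \<le> t" "t \<le> 1" using s1 t_def by auto
    define z where "z = t *\<^sub>R y + (1 - t) *\<^sub>R y0"
    have "z - y0 = t *\<^sub>R (y - y0)" unfolding z_def by (simp add: algebra_simps)
    moreover have "y \<noteq> y0" using s1 s_def by auto
    ultimately have "norm (z - y0) = 1" using s1 t_def s_def by simp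
    then have "f p \<le> f z" using p(2)[of z] by (metis dist_norm mem_cball norm_minus_commute order_refl)
    also have "f z \<le> ereal t * f y + ereal (1 - t) * f y0"
      using cv t unfolding convex_efun_def z_def by (simp only:)
    finally have fz: "ereal m0 \<le> ereal t * f y + ereal (1 - t) * ereal b" using m0 y0 by simp
    show ?thesis
    proof (cases "f y")
      case (real a)
      have "m0 \<le> t * a + (1 - t) * b" using fz real by simp
      then have "s * m0 \<le> s * (t * a + (1 - t) * b)" using s1 by (intro mult_left_mono) auto
      also have "\<dots> = a + (s - 1) * b" using s1 t_def by (simp add: field_simps)
      finally have "s * m0 \<le> a + (s - 1) * b" .
      then have "b - D - D * s \<le> a" using m0(2) unfolding D_def by (simp add: algebra_simps)
      then show ?thesis using real s_def by simp
    next
      case PInf then show ?thesis by simp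
    next
      case MInf then show ?thesis using pr unfolding proper_fun_def by auto
    qed
  qed
  then show ?thesis using D by blast
qed

subsection \<open>The proximal operator\<close>

lemma prox_objective_coercive:
  fixes f :: "'a::real_normed_vector \<Rightarrow> ereal"
  assumes D: "D \<ge> 0" and minorant: "\<And>y. ereal (A - D * norm (y - y0)) \<le> f y"
    and y0: "f y0 = ereal b"
  obtains R where "R \<ge> 0"
    "\<And>y. R < norm (y - y0) \<Longrightarrow>
       f y0 + ereal ((norm (y0 - \<theta>))\<^sup>2 / 2) \<le> f y + ereal ((norm (y - \<theta>))\<^sup>2 / 2)"
proof
  define e where "e = norm (y0 - \<theta>)"
  define R where "R = 2 * e + 2 * D + 2 + \<bar>b - A\<bar>"
  show "R \<ge> 0" using D unfolding R_def e_def by simp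
  fix y assume "R < norm (y - y0)"
  define s where "s = norm (y - y0)"
  have e: "e \<ge> 0" unfolding e_def by simp
  have sR: "2 * e + 2 * D + 2 + \<bar>b - A\<bar> < s"
    using \<open>R < norm (y - y0)\<close> unfolding R_def s_def .
  have "s \<le> norm (y - \<theta>) + e" unfolding s_def e_def
    using norm_triangle_ineq[of "y - \<theta>" "\<theta> - y0"] by (simp add: norm_minus_commute)
  moreover have s_big: "2 * e + 2 * D + 2 \<le> s" using sR by linarith
  then have "0 \<le> s - e" using D e by linarith
  ultimately have "(s - e)\<^sup>2 \<le> (norm (y - \<theta>))\<^sup>2" by (intro power_mono) auto
  moreover have "s * 1 \<le> s * (s / 2 - e - D)"
    using s_big D e by (intro mult_left_mono) linarith+
  then have "s \<le> (s - e)\<^sup>2 / 2 - e\<^sup>2 / 2 - D * s" by (simp add: power2_eq_square algebra_simps)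
  moreover have "b \<le> A + s" using sR D e by linarith
  ultimately have "b + e\<^sup>2 / 2 \<le> A - D * s + (norm (y - \<theta>))\<^sup>2 / 2" by linarith
  then have "f y0 + ereal ((norm (y0 - \<theta>))\<^sup>2 / 2) \<le> ereal (A - D * s) + ereal ((norm (y - \<theta>))\<^sup>2 / 2)"
    using y0 unfolding e_def by simp
  also have "\<dots> \<le> f y + ereal ((norm (y - \<theta>))\<^sup>2 / 2)"
    unfolding s_def by (intro add_right_mono minorant)
  finally show "f y0 + ereal ((norm (y0 - \<theta>))\<^sup>2 / 2) \<le> f y + ereal ((norm (y - \<theta>))\<^sup>2 / 2)" .
qed

lemma prox_minimizer_exists:
  fixes f :: "'a::euclidean_space \<Rightarrow> ereal"
  assumes pr: "proper_fun f" and cl: "closed_fun f" and cv: "convex_efun f"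
  shows "\<exists>\<delta>. prox_minimizer f \<theta> \<delta>"
proof -
  obtain y0 where "f y0 < \<infinity>" "f y0 \<noteq> -\<infinity>" using pr unfolding proper_fun_def by auto
  then obtain b where b: "f y0 = ereal b" by (cases "f y0") auto
  obtain A D where D: "D \<ge> 0" "\<And>y. ereal (A - D * norm (y - y0)) \<le> f y"
    using proper_closed_convex_cone_minorant[OF pr cl cv b] by blast
  obtain R where R: "R \<ge> 0"
    "\<And>y. R < norm (y - y0) \<Longrightarrow>
       f y0 + ereal ((norm (y0 - \<theta>))\<^sup>2 / 2) \<le> f y + ereal ((norm (y - \<theta>))\<^sup>2 / 2)"
    using prox_objective_coercive[OF D b] by blast
  define \<phi> where "\<phi> y = f y + ereal ((norm (y - \<theta>))\<^sup>2 / 2)" for y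
  have "continuous_on UNIV (\<lambda>y. (norm (y - \<theta>))\<^sup>2 / 2)" by (intro continuous_intros) auto
  then have "closed {y. \<phi> y \<le> ereal r}" for r
    unfolding \<phi>_def by (rule closed_fun_add_continuous_sublevel[OF cl])
  moreover have "compact (cball y0 R)" "cball y0 R \<noteq> {}" using \<open>R \<ge> 0\<close> by auto
  ultimately obtain p where p: "p \<in> cball y0 R" "\<And>y. y \<in> cball y0 R \<Longrightarrow> \<phi> p \<le> \<phi> y"
    using compact_attains_min_closed_sublevels[of "cball y0 R" \<phi>] by blast
  have "\<phi> p \<le> \<phi> y" for y
  proof (cases "y \<in> cball y0 R")
    case False
    then have "R < norm (y - y0)" by (simp add: dist_norm norm_minus_commute)
    then have "\<phi> y0 \<le> \<phi> y" using R(2) unfolding \<phi>_def by blast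
    then show ?thesis using p(2)[of y0] \<open>R \<ge> 0\<close> by (metis centre_in_cball order.trans)
  qed (use p in auto)
  then show ?thesis unfolding \<phi>_def prox_minimizer_def by blast
qed

lemma prox_minimizer_finite:
  assumes "proper_fun f" "prox_minimizer f \<theta> \<delta>"
  shows "\<exists>r. f \<delta> = ereal r"
proof -
  obtain y0 where "f y0 < \<infinity>" using assms(1) unfolding proper_fun_def by auto
  then have "f y0 + ereal ((norm (y0 - \<theta>))\<^sup>2 / 2) < \<infinity>" by simp
  then have "f \<delta> + ereal ((norm (\<delta> - \<theta>))\<^sup>2 / 2) < \<infinity>"
    using assms(2) unfolding prox_minimizer_def by (meson le_less_trans)
  moreover have "f \<delta> \<noteq> -\<infinity>" using assms(1) unfolding proper_fun_def by auto
  ultimately show ?thesis by (cases "f \<delta>") auto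
qed

lemma norm_midpoint_square:
  fixes u w :: "'a::real_inner"
  shows "(norm ((1/2) *\<^sub>R u + (1/2) *\<^sub>R w))\<^sup>2 = (norm u)\<^sup>2 / 2 + (norm w)\<^sup>2 / 2 - (norm (u - w))\<^sup>2 / 4"
  by (simp add: power2_norm_eq_inner inner_simps algebra_simps inner_commute) (simp add: field_simps)

lemma prox_minimizer_unique:
  fixes f :: "'a::euclidean_space \<Rightarrow> ereal"
  assumes pr: "proper_fun f" and cv: "convex_efun f"
    and d1: "prox_minimizer f \<theta> d1" and d2: "prox_minimizer f \<theta> d2"
  shows "d1 = d2"
proof -
  obtain a1 a2 where a: "f d1 = ereal a1" "f d2 = ereal a2"
    using prox_minimizer_finite[OF pr d1] prox_minimizer_finite[OF pr d2] by blast
  define q where "q y = (norm (y - \<theta>))\<^sup>2 / 2" for y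
  have d: "f d + ereal (q d) \<le> f y + ereal (q y)" if "prox_minimizer f \<theta> d" for d y
    using that unfolding prox_minimizer_def q_def by blast
  have e12: "a1 + q d1 \<le> a2 + q d2" and e21: "a2 + q d2 \<le> a1 + q d1"
    using d[OF d1, of d2] d[OF d2, of d1] a by simp_all
  define mid where "mid = (1/2::real) *\<^sub>R d1 + (1 - 1/2) *\<^sub>R d2"
  have "f mid \<le> ereal (1/2) * f d1 + ereal (1 - 1/2) * f d2"
    using cv unfolding convex_efun_def mid_def
    by (elim allE[of _ d1] allE[of _ d2] allE[of _ "1/2"]) simp
  then have fm: "f mid \<le> ereal ((a1 + a2) / 2)" using a by (simp add: field_simps)
  have "mid - \<theta> = (1/2) *\<^sub>R (d1 - \<theta>) + (1/2) *\<^sub>R (d2 - \<theta>)"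
    unfolding mid_def by (simp add: algebra_simps flip: scaleR_add_left)
  then have qm: "q mid = q d1 / 2 + q d2 / 2 - (norm (d1 - d2))\<^sup>2 / 8"
    unfolding q_def using norm_midpoint_square[of "d1 - \<theta>" "d2 - \<theta>"] by simp
  have "ereal (a1 + q d1) \<le> f mid + ereal (q mid)" using d[OF d1, of mid] a by simp
  also have "\<dots> \<le> ereal ((a1 + a2) / 2) + ereal (q mid)" using fm by (intro add_right_mono)
  finally have "a1 + q d1 \<le> (a1 + a2) / 2 + q mid" by simp
  then have "(norm (d1 - d2))\<^sup>2 \<le> 0" using qm e12 e21 by argo
  then show ?thesis by simp
qed

lemma prox_minimizer_prox:
  fixes f :: "'a::euclidean_space \<Rightarrow> ereal"
  assumes "proper_fun f" "closed_fun f" "convex_efun f"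
  shows "prox_minimizer f \<theta> (prox f \<theta>)"
proof -
  have "\<exists>!\<delta>. prox_minimizer f \<theta> \<delta>"
    using prox_minimizer_exists[OF assms] prox_minimizer_unique[OF assms(1,3)] by blast
  then show ?thesis unfolding prox_def prox_minimizer_def[abs_def] by (rule theI')
qed

lemma prox_minimizer_segment_bound:
  fixes f :: "'a::real_inner \<Rightarrow> ereal"
  assumes pr: "proper_fun f" and cv: "convex_efun f" and mn: "prox_minimizer f \<theta> x"
    and fx: "f x = ereal fx" and fy: "f y = ereal a" and t: "0 < t" "t \<le> 1"
  shows "fx \<le> a + (x - \<theta>) \<bullet> (y - x) + t * (norm (y - x))\<^sup>2 / 2"
proof -
  define P where "P = (x - \<theta>) \<bullet> (y - x)"
  define N where "N = (norm (y - x))\<^sup>2"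
  define z where "z = t *\<^sub>R y + (1 - t) *\<^sub>R x"
  have "f z \<le> ereal t * f y + ereal (1 - t) * f x"
    using cv t unfolding convex_efun_def z_def by simp
  then obtain b where b: "f z = ereal b" "b \<le> t * a + (1 - t) * fx"
    using pr fy fx unfolding proper_fun_def by (cases "f z") auto
  have zt: "z - \<theta> = (x - \<theta>) + t *\<^sub>R (y - x)" unfolding z_def by (simp add: algebra_simps)
  have nz: "(norm (z - \<theta>))\<^sup>2 = (norm (x - \<theta>))\<^sup>2 + 2 * t * P + t * t * N"
    unfolding zt P_def N_def
    by (simp add: power2_norm_eq_inner inner_add_left inner_add_right inner_commute algebra_simps)
  have "fx + (norm (x - \<theta>))\<^sup>2 / 2 \<le> b + (norm (z - \<theta>))\<^sup>2 / 2"
    using mn fx b unfolding prox_minimizer_def by (metis ereal_less_eq(3) plus_ereal.simps(1))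
  then have "fx \<le> t * a + (1 - t) * fx + t * P + t * t * N / 2" using nz b(2) by argo
  then have "t * fx \<le> t * (a + P + t * N / 2)" by (simp add: algebra_simps)
  then show ?thesis using t unfolding P_def N_def by simp
qed

lemma prox_minimizer_has_subgradient:
  fixes f :: "'a::real_inner \<Rightarrow> ereal"
  assumes pr: "proper_fun f" and cv: "convex_efun f" and mn: "prox_minimizer f \<theta> x"
  shows "has_subgradient f x (\<theta> - x)"
  unfolding has_subgradient_def
proof
  fix y
  obtain fx where fx: "f x = ereal fx" using prox_minimizer_finite[OF pr mn] by blast
  show "f x + ereal ((\<theta> - x) \<bullet> (y - x)) \<le> f y"
  proof (cases "f y")
    case (real a)
    define P where "P = (x - \<theta>) \<bullet> (y - x)"
    define N where "N = (norm (y - x))\<^sup>2"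
    have "fx \<le> a + P"
    proof (rule ccontr)
      \<comment> \<open>Choose \<open>t\<close> so small that the quadratic term \<open>t N / 2\<close> cannot absorb the gap.\<close>
      assume "\<not> fx \<le> a + P"
      then have g: "fx - a - P > 0" by simp
      define t where "t = (if N = 0 then 1 else min 1 ((fx - a - P) / N))"
      have N: "N \<ge> 0" unfolding N_def by simp
      have t: "0 < t" "t \<le> 1" using g N unfolding t_def by auto
      have "t * N \<le> fx - a - P"
      proof (cases "N = 0")
        case False
        then have "t * N \<le> (fx - a - P) / N * N"
          using N unfolding t_def by (intro mult_right_mono) auto
        then show ?thesis using False by simp
      qed (use g in simp)
      then show False
        using prox_minimizer_segment_bound[OF pr cv mn fx real t] g unfolding P_def N_def by linarith
    qed
    then have "fx + (\<theta> - x) \<bullet> (y - x) \<le> a"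
      unfolding P_def by (simp add: inner_simps inner_commute algebra_simps)
    then show ?thesis using fx real by simp
  next
    case MInf then show ?thesis using pr unfolding proper_fun_def by auto
  qed simp
qed

lemma prox_fixed_point_has_subgradient:
  fixes f :: "'a::euclidean_space \<Rightarrow> ereal"
  assumes "proper_fun f" "closed_fun f" "convex_efun f" "prox f \<theta> = x"
  shows "has_subgradient f x (\<theta> - x)"
  using prox_minimizer_has_subgradient prox_minimizer_prox assms by metis

lemma strongly_convex_with_imp_convex_on:
  fixes f :: "'a::real_normed_vector \<Rightarrow> real"
  assumes "strongly_convex_with c f"
  shows "convex_on UNIV f"
proof (rule convex_onI)
  fix t :: real and x y :: 'a
  assume t: "0 < t" "t < 1"
  have "0 \<le> c / 2 * t * (1 - t) * (norm (y - x))\<^sup>2"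
    using assms t unfolding strongly_convex_with_def by auto
  then show "f ((1 - t) *\<^sub>R x + t *\<^sub>R y) \<le> (1 - t) * f x + t * f y"
    using assms t unfolding strongly_convex_with_def
    by (smt (verit, best) add.commute)
qed simp

lemma convex_gradient_has_subgradient:
  fixes f :: "'a::real_inner \<Rightarrow> real"
  assumes cvx: "convex_on UNIV f" and grad: "GDERIV f x :> s"
  shows "has_subgradient (\<lambda>y. ereal (f y)) x s"
  unfolding has_subgradient_def
proof
  fix y
  define \<phi> where "\<phi> t = f (x + t *\<^sub>R (y - x))" for t :: real
  have "convex_on UNIV \<phi>"
  proof (rule convex_onI)
    fix t a b :: real assume "0 < t" "t < 1"
    have "x + ((1 - t) *\<^sub>R a + t *\<^sub>R b) *\<^sub>R (y - x)
        = (1 - t) *\<^sub>R (x + a *\<^sub>R (y - x)) + t *\<^sub>R (x + b *\<^sub>R (y - x))"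
      by (simp add: algebra_simps)
    then show "\<phi> ((1 - t) *\<^sub>R a + t *\<^sub>R b) \<le> (1 - t) * \<phi> a + t * \<phi> b"
      unfolding \<phi>_def using convex_onD[OF cvx, of t] \<open>0 < t\<close> \<open>t < 1\<close> by simp
  qed simp
  moreover have "((\<lambda>t. x + t *\<^sub>R (y - x)) has_derivative (\<lambda>t. t *\<^sub>R (y - x))) (at 0)"
    by (intro derivative_eq_intros) auto
  from has_derivative_compose[OF this, of f "\<lambda>h. h \<bullet> s"] grad
  have "(\<phi> has_field_derivative ((y - x) \<bullet> s)) (at 0)"
    unfolding \<phi>_def gderiv_def o_def by (auto intro: has_derivative_imp_has_field_derivative)
  ultimately have "\<phi> 1 - \<phi> 0 \<ge> ((y - x) \<bullet> s) * (1 - 0)"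
    using convex_on_imp_above_tangent[of UNIV \<phi> 0 1] by simp
  then show "ereal (f x) + ereal (s \<bullet> (y - x)) \<le> ereal (f y)"
    unfolding \<phi>_def by (simp add: inner_commute)
qed

lemma has_subgradient_add:
  assumes "has_subgradient f x s" "has_subgradient g x t"
  shows "has_subgradient (\<lambda>y. f y + g y) x (s + t)"
  unfolding has_subgradient_def
proof
  fix y
  have "f x + g x + ereal ((s + t) \<bullet> (y - x)) = (f x + ereal (s \<bullet> (y - x))) + (g x + ereal (t \<bullet> (y - x)))"
    by (simp add: inner_add_left ac_simps)
  also have "\<dots> \<le> f y + g y"
    using assms unfolding has_subgradient_def by (intro add_mono) auto
  finally show "f x + g x + ereal ((s + t) \<bullet> (y - x)) \<le> f y + g y" .
qed

lemma has_subgradient_sum: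
  assumes "finite J" "\<And>j. j \<in> J \<Longrightarrow> has_subgradient (f j) x (s j)"
  shows "has_subgradient (\<lambda>y. \<Sum>j\<in>J. f j y) x (\<Sum>j\<in>J. s j)"
  using assms
proof (induction J rule: finite_induct)
  case empty then show ?case by (simp add: has_subgradient_def)
next
  case (insert j J)
  then show ?case by (simp add: has_subgradient_add)
qed

lemma sum_le_of_common_subgradient:
  fixes F :: "'n::finite \<Rightarrow> 'a::real_inner \<Rightarrow> ereal"
  assumes sub: "\<And>i. has_subgradient (F i) (x i) v"
    and same_total: "(\<Sum>i\<in>UNIV. y i) = (\<Sum>i\<in>UNIV. x i)"
  shows "(\<Sum>i\<in>UNIV. F i (x i)) \<le> (\<Sum>i\<in>UNIV. F i (y i))"
proof -
  have "(\<Sum>i\<in>UNIV. v \<bullet> (y i - x i)) = v \<bullet> ((\<Sum>i\<in>UNIV. y i) - (\<Sum>i\<in>UNIV. x i))"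
    by (simp add: inner_diff_right inner_sum_right sum_subtractf)
  then have "(\<Sum>i\<in>UNIV. F i (x i)) = (\<Sum>i\<in>UNIV. F i (x i)) + ereal (\<Sum>i\<in>UNIV. v \<bullet> (y i - x i))"
    using same_total by simp
  also have "\<dots> = (\<Sum>i\<in>UNIV. F i (x i) + ereal (v \<bullet> (y i - x i)))"
    by (simp add: sum.distrib sum_ereal)
  also have "\<dots> \<le> (\<Sum>i\<in>UNIV. F i (y i))"
    using sub unfolding has_subgradient_def by (intro sum_mono) blast
  finally show ?thesis .
qed

lemma prox_equilibrium_has_subgradient:
  fixes f0 :: "'a::euclidean_space \<Rightarrow> real" and f :: "nat \<Rightarrow> 'a \<Rightarrow> ereal" and z :: "nat \<Rightarrow> 'a"
  assumes m: "1 \<le> m"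
    and f0: "convex_on UNIV f0" "GDERIV f0 x :> g"
    and f: "\<And>j. j \<in> {1..m} \<Longrightarrow> proper_fun (f j) \<and> closed_fun (f j) \<and> convex_efun (f j)"
    and prox_m: "prox (f m) (x - g + v + \<gamma> *\<^sub>R (\<Sum>j\<in>{1..m-1}. z j)) = x"
    and prox_j: "\<And>j. j \<in> {1..m-1} \<Longrightarrow> prox (f j) (x - \<gamma> *\<^sub>R z j) = x"
  shows "has_subgradient (\<lambda>y. ereal (f0 y) + (\<Sum>j\<in>{1..m}. f j y)) x v"
proof -
  have split: "{1..m} = insert m {1..m-1}" "m \<notin> {1..m-1}" using m by auto
  have "has_subgradient (\<lambda>y. ereal (f0 y)) x g"
    using convex_gradient_has_subgradient[OF f0] .
  moreover have "has_subgradient (f m) x (v - g + \<gamma> *\<^sub>R (\<Sum>j\<in>{1..m-1}. z j))"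
    using prox_fixed_point_has_subgradient[OF _ _ _ prox_m] f[of m] m by (simp add: algebra_simps)
  moreover have "has_subgradient (\<lambda>y. \<Sum>j\<in>{1..m-1}. f j y) x (\<Sum>j\<in>{1..m-1}. - (\<gamma> *\<^sub>R z j))"
    using prox_fixed_point_has_subgradient[OF _ _ _ prox_j] f
    by (intro has_subgradient_sum) fastforce+
  ultimately have "has_subgradient (\<lambda>y. ereal (f0 y) + (f m y + (\<Sum>j\<in>{1..m-1}. f j y))) x
      (g + ((v - g + \<gamma> *\<^sub>R (\<Sum>j\<in>{1..m-1}. z j)) + (\<Sum>j\<in>{1..m-1}. - (\<gamma> *\<^sub>R z j))))"
    by (intro has_subgradient_add)
  then show ?thesis
    unfolding split(1) sum.insert[OF finite_atLeastAtMost split(2)] by (simp add: sum_negf scaleR_sum_right)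
qed

lemma sum_eq_of_weighted_deviation:
  fixes x d w :: "'n::finite \<Rightarrow> 'a::real_vector"
  assumes h: "\<And>i. h i \<noteq> 0"
    and deviation: "\<And>i. (1 / h i) *\<^sub>R (x i - d i) = - w i"
    and balanced: "(\<Sum>i\<in>UNIV. h i *\<^sub>R w i) = 0"
  shows "(\<Sum>i\<in>UNIV. x i) = (\<Sum>i\<in>UNIV. d i)"
proof -
  have "x i - d i = - (h i *\<^sub>R w i)" for i
    using arg_cong[OF deviation[of i], of "scaleR (h i)"] h[of i] by simp
  then have "(\<Sum>i\<in>UNIV. x i - d i) = - (\<Sum>i\<in>UNIV. h i *\<^sub>R w i)"
    by (simp add: sum_negf)
  then show ?thesis using balanced by (simp add: sum_subtractf)
qed

subsection \<open>The graph Laplacian\<close>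

lemma laplacian_sum_eq:
  "(\<Sum>k\<in>UNIV. laplacian a i k * u k) = (\<Sum>k\<in>UNIV. a i k * (u i - u k))"
proof -
  have "(\<Sum>k\<in>UNIV. laplacian a i k * u k)
      = (\<Sum>k\<in>UNIV. if i = k then (\<Sum>l\<in>UNIV. a i l) * u k else 0) - (\<Sum>k\<in>UNIV. a i k * u k)"
    unfolding laplacian_def by (subst sum_subtractf[symmetric], rule sum.cong) (auto simp: left_diff_distrib)
  also have "\<dots> = (\<Sum>k\<in>UNIV. a i k * (u i - u k))"
    by (simp add: sum_distrib_right right_diff_distrib sum_subtractf)
  finally show ?thesis .
qed

text \<open>The kernel of the Laplacian of a strongly connected digraph consists of the constants:
at a maximum of \<open>u\<close> every term \<open>a i k (u i - u k)\<close> is nonnegative, hence zero, so the maximum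
propagates along the edges.\<close>

lemma laplacian_kernel_constant:
  fixes a :: "'n::finite \<Rightarrow> 'n \<Rightarrow> real" and u :: "'n \<Rightarrow> real"
  assumes nonneg: "\<And>i j. a i j \<ge> 0"
    and connected: "\<And>i j. (i, j) \<in> {(k, l). a k l > 0}\<^sup>*"
    and kernel: "\<And>i. (\<Sum>k\<in>UNIV. laplacian a i k * u k) = 0"
  shows "u i = u j"
proof -
  obtain i0 where i0: "\<And>k. u k \<le> u i0"
    using Max_in[of "range u"] Max_ge[of "range u"] by (metis UNIV_not_empty finite finite_imageI image_is_empty imageE rangeI)
  have step: "u k = u i0" if "u l = u i0" "a l k > 0" for l k
  proof -
    have "\<And>k. 0 \<le> a l k * (u l - u k)" using nonneg i0 that(1) by simp
    then have "a l k * (u l - u k) = 0"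
      using kernel[of l] sum_nonneg_eq_0_iff[of UNIV "\<lambda>k. a l k * (u l - u k)"]
      by (simp add: laplacian_sum_eq)
    then show ?thesis using that by simp
  qed
  have "u k = u i0" for k
    using connected[of i0 k] by (induction rule: rtrancl_induct) (auto intro: step)
  then show ?thesis by metis
qed

lemma laplacian_kernel_constant_vector:
  fixes a :: "'n::finite \<Rightarrow> 'n \<Rightarrow> real" and u :: "'n \<Rightarrow> 'a::real_inner"
  assumes nonneg: "\<And>i j. a i j \<ge> 0"
    and connected: "\<And>i j. (i, j) \<in> {(k, l). a k l > 0}\<^sup>*"
    and kernel: "\<And>i. (\<Sum>k\<in>UNIV. laplacian a i k *\<^sub>R u k) = 0"
  shows "u i = u j"
proof -
  have "u i \<bullet> w = u j \<bullet> w" for w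
  proof (rule laplacian_kernel_constant[OF nonneg connected])
    fix i
    show "(\<Sum>k\<in>UNIV. laplacian a i k * (u k \<bullet> w)) = 0"
      using arg_cong[OF kernel[of i], of "\<lambda>v. v \<bullet> w"] by (simp add: inner_sum_left)
  qed
  then have "(u i - u j) \<bullet> (u i - u j) = 0" by (simp add: inner_diff_left)
  then show ?thesis by simp
qed

text \<open>Only part of the hypotheses is needed: the bounds on \<open>c\<close> and \<open>\<gamma>\<close>, (A4), \<open>a i i = 0\<close> and the
eigenvector equations for \<open>h\<close> serve the convergence analysis, not the optimality of equilibria.\<close>

theorem lemma4:
  fixes m :: nat and c \<alpha> \<gamma> :: real
    and f0 :: "'n::finite \<Rightarrow> real^'q \<Rightarrow> real"
    and g0 :: "'n \<Rightarrow> real^'q \<Rightarrow> real^'q"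
    and f :: "nat \<Rightarrow> 'n \<Rightarrow> real^'q \<Rightarrow> ereal"
    and a :: "'n \<Rightarrow> 'n \<Rightarrow> real"
    and h :: "'n \<Rightarrow> real"
    and d :: "'n \<Rightarrow> real^'q"
    and xs vs ws :: "'n \<Rightarrow> real^'q"
    and zs :: "nat \<Rightarrow> 'n \<Rightarrow> real^'q"
  assumes m2: "m \<ge> 2"
    and A1: "\<And>i. strongly_convex_with c (f0 i) \<and> C2_with_gradient (f0 i) (g0 i)"
    and cbound: "c > real m - 1"
    and A2: "\<And>i j. j \<in> {1..m} \<Longrightarrow> proper_fun (f j i) \<and> closed_fun (f j i) \<and> convex_efun (f j i)"
    and A3_nonneg: "\<And>i j. a i j \<ge> 0"
    and A3_diag: "\<And>i. a i i = 0"
    and A3_sc: "\<And>i j. (i, j) \<in> {(k, l). a k l > 0}\<^sup>*"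
    and A4: "\<exists>y::'n \<Rightarrow> real^'q. (\<Sum>i\<in>UNIV. y i) = (\<Sum>i\<in>UNIV. d i) \<and>
               (\<Sum>i\<in>UNIV. ereal (f0 i (y i)) + (\<Sum>j\<in>{1..m}. f j i (y i))) < \<infinity>"
    and h_pos: "\<And>i. h i > 0"
    and h_sum: "(\<Sum>i\<in>UNIV. h i) = 1"
    and h_left: "\<And>k. (\<Sum>i\<in>UNIV. h i * ((if i = k then (\<Sum>l\<in>UNIV. a i l) else 0) - a i k)) = 0"
    and alpha: "\<alpha> > 0"
    and gamma: "0 < \<gamma>" "\<gamma> < 1 / (real m - 1)"
    and eq_x: "\<And>i. prox (f m i) (xs i - g0 i (xs i) + vs i + \<gamma> *\<^sub>R (\<Sum>j\<in>{1..m-1}. zs j i)) - xs i = 0"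
    and eq_z: "\<And>i j. j \<in> {1..m-1} \<Longrightarrow> prox (f j i) (xs i - \<gamma> *\<^sub>R zs j i) - xs i = 0"
    and eq_v: "\<And>i. - ((1 / h i) *\<^sub>R (xs i - d i))
               - \<alpha> *\<^sub>R (\<Sum>k\<in>UNIV. ((if i = k then (\<Sum>l\<in>UNIV. a i l) else 0) - a i k) *\<^sub>R vs k)
               - ws i = 0"
    and eq_w: "\<And>i. \<alpha> *\<^sub>R (\<Sum>k\<in>UNIV. ((if i = k then (\<Sum>l\<in>UNIV. a i l) else 0) - a i k) *\<^sub>R vs k) = 0"
    and w_cond: "(\<Sum>i\<in>UNIV. h i *\<^sub>R ws i) = 0"
  shows "(\<Sum>i\<in>UNIV. xs i) = (\<Sum>i\<in>UNIV. d i) \<and>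
         (\<forall>y::'n \<Rightarrow> real^'q. (\<Sum>i\<in>UNIV. y i) = (\<Sum>i\<in>UNIV. d i) \<longrightarrow>
            (\<Sum>i\<in>UNIV. ereal (f0 i (xs i)) + (\<Sum>j\<in>{1..m}. f j i (xs i)))
              \<le> (\<Sum>i\<in>UNIV. ereal (f0 i (y i)) + (\<Sum>j\<in>{1..m}. f j i (y i))))"
proof -
  have kernel: "(\<Sum>k\<in>UNIV. laplacian a i k *\<^sub>R vs k) = 0" for i
    using eq_w[of i] alpha unfolding laplacian_def by simp
  obtain v where v: "\<And>i. vs i = v"
    using laplacian_kernel_constant_vector[OF A3_nonneg A3_sc kernel] by metis
  have "(1 / h i) *\<^sub>R (xs i - d i) = - ws i" for i
    using eq_v[of i] kernel[of i] unfolding laplacian_def by (simp add: algebra_simps)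
  then have feasible: "(\<Sum>i\<in>UNIV. xs i) = (\<Sum>i\<in>UNIV. d i)"
    using sum_eq_of_weighted_deviation[OF h_pos[THEN dual_order.strict_implies_not_eq] _ w_cond] by blast
  have "has_subgradient (\<lambda>y. ereal (f0 i y) + (\<Sum>j\<in>{1..m}. f j i y)) (xs i) v" for i
  proof (rule prox_equilibrium_has_subgradient)
    show "1 \<le> m" using m2 by simp
    show "convex_on UNIV (f0 i)" "GDERIV (f0 i) (xs i) :> g0 i (xs i)"
      using A1[of i] strongly_convex_with_imp_convex_on unfolding C2_with_gradient_def by blast+
    show "prox (f m i) (xs i - g0 i (xs i) + v + \<gamma> *\<^sub>R (\<Sum>j\<in>{1..m-1}. zs j i)) = xs i"
      using eq_x[of i] v[of i] by simp
    show "prox (f j i) (xs i - \<gamma> *\<^sub>R zs j i) = xs i" if "j \<in> {1..m-1}" for j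
      using eq_z[OF that] by simp
    show "proper_fun (f j i) \<and> closed_fun (f j i) \<and> convex_efun (f j i)" if "j \<in> {1..m}" for j
      using A2[OF that] .
  qed
  note optimal = sum_le_of_common_subgradient[of "\<lambda>i y. ereal (f0 i y) + (\<Sum>j\<in>{1..m}. f j i y)", OF this]
  show ?thesis
    by (intro conjI allI impI feasible optimal) (simp add: feasible)
qed

end
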